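(* Let $z\in\mathbb{R}$ and $\tau\in\mathcal{L}$ with $C(\tau)=\{z\}$. Then $(\mathbb{R},\tau)$ is second countable if and only if the point $z$ has a countable local base in $(\mathbb{R},\tau)$; and $(\mathbb{R},\tau)$ is completely normal if and only if it is regular.
   Context: $\eta$ denotes the Euclidean topology on $\mathbb{R}$. $\mathcal{L}$ denotes the family of all Hausdorff topologies $\tau$ on $\mathbb{R}$ with $\tau\subset\eta$. For $\tau\in\mathcal{L}$ and $a\in\mathbb{R}$ let $\mathcal{N}_\tau(a)$ be the neighborhood filter of $a$ in $(\mathbb{R},\tau)$; $C(\tau)$ is the set of all $a\in\mathbb{R}$ with $\mathcal{N}_\tau(a)\neq\mathcal{N}_\eta(a)$. *)

theory Defs
  imports "HOL-Analysis.Analysis"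
begin

text \<open>The family L: Hausdorff topologies on the reals coarser than the Euclidean one.\<close>
definition coarser_Hausdorff :: "real topology \<Rightarrow> bool" where
  "coarser_Hausdorff T \<longleftrightarrow> topspace T = UNIV \<and> Hausdorff_space T \<and>
     (\<forall>S. openin T S \<longrightarrow> openin euclidean S)"

definition nbhds :: "'a topology \<Rightarrow> 'a \<Rightarrow> 'a set set" where
  "nbhds T a = {N. \<exists>U. openin T U \<and> a \<in> U \<and> U \<subseteq> N}"

definition Cset :: "real topology \<Rightarrow> real set" where
  "Cset T = {a. nbhds T a \<noteq> nbhds euclidean a}"

definition countable_local_base :: "'a topology \<Rightarrow> 'a \<Rightarrow> bool" where
  "countable_local_base T z \<longleftrightarrow>
     (\<exists>\<B>. countable \<B> \<and> (\<forall>V\<in>\<B>. openin T V \<and> z \<in> V) \<and>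
        (\<forall>U. openin T U \<and> z \<in> U \<longrightarrow> (\<exists>V\<in>\<B>. V \<subseteq> U)))"

definition completely_normal_space :: "'a topology \<Rightarrow> bool" where
  "completely_normal_space T \<longleftrightarrow> hereditarily normal_space T"

end

theory Submission
  imports Defs
begin

text \<open>Away from \<open>z\<close> the topology \<open>T\<close> has the Euclidean open sets, so a countable Euclidean
  basis with the members containing \<open>z\<close> discarded, together with a countable local base at \<open>z\<close>,
  is a countable basis of \<open>T\<close>. For the second equivalence, \<open>T\<close> is coarser than the Euclidean
  topology, so every subspace of \<open>(\<real>, T)\<close> is a continuous image of a Lindelof subspace of \<open>\<real>\<close>
  and hence Lindelof; regular Lindelof spaces are normal, and regularity passes to subspaces.
  Conversely a completely normal Hausdorff space is normal and T1, hence regular.\<close>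

lemma openin_if_nbhds_eq:
  assumes "openin S U" and "\<And>a. a \<in> U \<Longrightarrow> nbhds T a = nbhds S a"
  shows "openin T U"
proof (subst openin_subopen, intro ballI)
  fix a assume "a \<in> U"
  then have "U \<in> nbhds T a"
    using assms unfolding nbhds_def by blast
  then show "\<exists>V. openin T V \<and> a \<in> V \<and> V \<subseteq> U"
    unfolding nbhds_def by blast
qed

lemma openin_if_disjoint_Cset:
  assumes "open U" and "U \<inter> Cset T = {}"
  shows "openin T U"
proof (rule openin_if_nbhds_eq)
  show "openin euclidean U"
    using assms(1) by simp
  show "nbhds T a = nbhds euclidean a" if "a \<in> U" for a
    using assms(2) that unfolding Cset_def by blast
qed

lemma countable_local_base_if_second_countable:
  assumes "second_countable X"
  shows "countable_local_base X z"
proof -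
  obtain \<B> where "countable \<B>" "\<forall>V\<in>\<B>. openin X V"
    and basis: "\<forall>U x. openin X U \<and> x \<in> U \<longrightarrow> (\<exists>V\<in>\<B>. x \<in> V \<and> V \<subseteq> U)"
    using assms unfolding second_countable_def by blast
  moreover have "\<exists>V\<in>{V\<in>\<B>. z \<in> V}. V \<subseteq> U" if "openin X U" "z \<in> U" for U
    using basis that by blast
  ultimately show ?thesis
    unfolding countable_local_base_def
    by (intro exI[of _ "{V\<in>\<B>. z \<in> V}"]) auto
qed

lemma second_countable_if_countable_local_base:
  fixes T :: "'a::{second_countable_topology, t1_space} topology"
  assumes coarser: "\<And>U. openin T U \<Longrightarrow> open U"
    and open_away: "\<And>U. open U \<Longrightarrow> z \<notin> U \<Longrightarrow> openin T U"
    and "countable_local_base T z"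
  shows "second_countable T"
proof -
  obtain \<B>\<^sub>z where "countable \<B>\<^sub>z" and local_base: "\<forall>V\<in>\<B>\<^sub>z. openin T V \<and> z \<in> V"
    "\<forall>U. openin T U \<and> z \<in> U \<longrightarrow> (\<exists>V\<in>\<B>\<^sub>z. V \<subseteq> U)"
    using assms(3) unfolding countable_local_base_def by blast
  obtain \<B> :: "'a set set" where "countable \<B>" and basis: "topological_basis \<B>"
    using ex_countable_basis by blast
  define \<B>' where "\<B>' = \<B>\<^sub>z \<union> {V\<in>\<B>. z \<notin> V}"
  have "countable \<B>'"
    unfolding \<B>'_def using \<open>countable \<B>\<^sub>z\<close> \<open>countable \<B>\<close> by simp
  moreover have "openin T V" if "V \<in> \<B>'" for V
    using that local_base open_away[OF topological_basis_open[OF basis]] unfolding \<B>'_def by blast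
  moreover have "\<exists>V\<in>\<B>'. x \<in> V \<and> V \<subseteq> U" if U: "openin T U" and x: "x \<in> U" for U x
  proof (cases "x = z")
    case True
    then obtain V where "V \<in> \<B>\<^sub>z" "V \<subseteq> U"
      using local_base(2) U x by blast
    then show ?thesis
      unfolding \<B>'_def using local_base(1) True by blast
  next
    case False
    have "open (U - {z})"
      using coarser[OF U] by (rule open_delete)
    moreover have "x \<in> U - {z}"
      using x False by blast
    ultimately obtain V where "V \<in> \<B>" "x \<in> V" "V \<subseteq> U - {z}"
      by (rule topological_basisE[OF basis])
    then show ?thesis
      unfolding \<B>'_def by blast
  qed
  ultimately show ?thesis
    unfolding second_countable_def by (intro exI[of _ \<B>']) blast
qed

lemma second_countable_euclidean:
  "second_countable (euclidean :: 'a::second_countable_topology topology)"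
proof -
  obtain \<B> :: "'a set set" where "countable \<B>" "topological_basis \<B>"
    using ex_countable_basis by blast
  then show ?thesis
    unfolding second_countable_def open_openin [symmetric]
    by (meson topological_basisE topological_basis_open)
qed

lemma Lindelof_space_coarser_subtopology:
  fixes T :: "'a::second_countable_topology topology"
  assumes "topspace T = UNIV" and "\<And>U. openin T U \<Longrightarrow> open U"
  shows "Lindelof_space (subtopology T S)"
proof (rule Lindelof_space_continuous_map_image)
  show "Lindelof_space (top_of_set S)"
    by (intro second_countable_imp_Lindelof_space second_countable_subtopology
        second_countable_euclidean)
  have "continuous_map euclidean T id"
    using assms by (simp add: continuous_map_def)
  then show "continuous_map (top_of_set S) (subtopology T S) id"
    by (simp add: continuous_map_into_subtopology continuous_map_from_subtopology)
  show "id ` topspace (top_of_set S) = topspace (subtopology T S)"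
    using assms(1) by simp
qed

lemma hereditarily_normal_if_regular_Lindelof:
  assumes "regular_space X" and "\<And>S. Lindelof_space (subtopology X S)"
  shows "hereditarily normal_space X"
  unfolding hereditarily
  using assms regular_Lindelof_imp_normal_space regular_space_subtopology by blast

theorem lemma4:
  fixes T :: "real topology" and z :: real
  assumes "coarser_Hausdorff T" and "Cset T = {z}"
  shows "(second_countable T \<longleftrightarrow> countable_local_base T z) \<and>
         (completely_normal_space T \<longleftrightarrow> regular_space T)"
proof -
  have top: "topspace T = UNIV" and "Hausdorff_space T"
    and coarser: "\<And>U. openin T U \<Longrightarrow> open U"
    using assms(1) unfolding coarser_Hausdorff_def by auto
  have open_away: "openin T U" if "open U" "z \<notin> U" for U
    using that assms(2) by (auto intro: openin_if_disjoint_Cset)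
  have "second_countable T \<longleftrightarrow> countable_local_base T z"
    using countable_local_base_if_second_countable
      second_countable_if_countable_local_base[OF coarser open_away] ..
  moreover have "completely_normal_space T \<longleftrightarrow> regular_space T"
  proof
    assume "completely_normal_space T"
    then have "normal_space T"
      unfolding completely_normal_space_def by (rule hereditarily_inc)
    then show "regular_space T"
      using \<open>Hausdorff_space T\<close> by (simp add: Hausdorff_imp_t1_space normal_t1_imp_regular_space)
  next
    assume "regular_space T"
    then show "completely_normal_space T"
      unfolding completely_normal_space_def
      using Lindelof_space_coarser_subtopology[OF top coarser]
      by (rule hereditarily_normal_if_regular_Lindelof)
  qed
  ultimately show ?thesis ..
qed

end
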